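(* For every integer $m\ge 0$, $$\int_0^{\pi/2}x^{2m}\frac{\ln(\sin x)}{\cos x}\,dx=2(2m)!\sum_{j=0}^m\frac{(-1)^{j-1}}{(2m-2j)!}\left(\frac{\pi}{2}\right)^{2m-2j}\sum_{k=0}^{2j}(-1)^k\,\beta(k+1)\,\beta(2j-k+1).$$
   Context: The Dirichlet beta function is $\beta(r)=\sum_{k=1}^\infty \frac{(-1)^{k-1}}{(2k-1)^r}$ for integers $r\ge1$. *)

theory Defs
  imports "HOL-Analysis.Analysis"
begin

text \<open>Dirichlet beta function: beta r = sum over k >= 1 of (-1)^(k-1) / (2k-1)^r,
  written with the shifted index k' = k - 1 >= 0.\<close>
definition dirichlet_beta :: "nat \<Rightarrow> real" where
  "dirichlet_beta r = (\<Sum>k. (-1) ^ k / (2 * real k + 1) ^ r)"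

end

(* For 0 < x < pi/2,
     - ln (sin x) / (2 cos x) = int_0^1 (1 - y) cos x / ((1 + y) (1 - 2 y cos 2x + y^2)) dy
   and (1 - y) cos x / (1 - 2 y cos 2x + y^2) = sum_n y^n cos ((2n+1) x).  By Tonelli the integral
   becomes sum_n M_n tau_n, where M_n = int_0^(pi/2) x^(2m) cos ((2n+1) x) dx is, after repeated
   integration by parts, a combination of the powers (-1)^n / (2n+1)^(2j+1), and
   tau_n = int_0^1 y^n / (1 + y) dy.  It remains to see that
   sum_n (-1)^n tau_n / (2n+1)^(2j+1) = sum_k (-1)^k beta(k+1) beta(2j-k+1).  Multiplying out the
   partial sums of the beta series and using
     sum_(k=0..2j) (-1)^k / (a^(k+1) b^(2j-k+1)) = (a^-(2j+1) + b^-(2j+1)) / (a + b)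
   with a = 2n+1, b = 2p+1, a + b = 2(n+p+1), the square of partial sums symmetrises to
   sum_(n<N) (-1)^n / (2n+1)^(2j+1) * sum_(p<N) (-1)^p / (n+p+1), and the inner sum is
   tau_n - (-1)^N tau_(n+N).  The leftover tail is alternating with decreasing terms, hence
   bounded by tau_N <= 1/(N+1). *)

theory Submission
  imports Defs
begin

lemma has_integral_real_open_interval_iff:
  fixes f :: "real \<Rightarrow> 'a::banach"
  shows "(f has_integral I) {a<..<b} \<longleftrightarrow> (f has_integral I) {a..b}"
  using has_integral_open_interval[of f I a b] by simp

lemma nn_integral_indicator_open_interval:
  fixes f :: "real \<Rightarrow> real"
  assumes "\<And>x. x \<in> {a<..<b} \<Longrightarrow> 0 \<le> f x" and "(f has_integral I) {a..b}"
  shows "(\<integral>\<^sup>+x. ennreal (indicator {a<..<b} x * f x) \<partial>lborel) = ennreal I"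
  using nn_integral_has_integral_lebesgue[OF assms(1) assms(2)[folded has_integral_real_open_interval_iff]]
  by simp

lemma has_integral_iterated_swap_nonneg:
  fixes f :: "real \<Rightarrow> real \<Rightarrow> real" and a b c d I :: real
  assumes f_meas: "case_prod f \<in> borel_measurable borel" and g_meas: "g \<in> borel_measurable borel"
    and nonneg: "\<And>x y. x \<in> {a<..<b} \<Longrightarrow> y \<in> {c<..<d} \<Longrightarrow> 0 \<le> f x y"
    and g: "\<And>x. x \<in> {a<..<b} \<Longrightarrow> ((\<lambda>y. f x y) has_integral g x) {c..d}"
    and h: "\<And>y. y \<in> {c<..<d} \<Longrightarrow> ((\<lambda>x. f x y) has_integral h y) {a..b}"
    and I: "(h has_integral I) {c..d}"
  shows "(g has_integral I) {a..b}"
proof -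
  define F where "F x y = ennreal (indicator {a<..<b} x * indicator {c<..<d} y * f x y)" for x y
  have g_nonneg: "0 \<le> g x" if "x \<in> {a<..<b}" for x
    using has_integral_nonneg[OF g[OF that, folded has_integral_real_open_interval_iff] nonneg[OF that]] .
  have h_nonneg: "0 \<le> h y" if "y \<in> {c<..<d}" for y
    using has_integral_nonneg[OF h[OF that, folded has_integral_real_open_interval_iff] nonneg[OF _ that]] .
  have "0 \<le> I"
    using has_integral_nonneg[OF I[folded has_integral_real_open_interval_iff] h_nonneg] .
  have inner_y: "(\<integral>\<^sup>+y. F x y \<partial>lborel) = ennreal (indicator {a<..<b} x * g x)" for x
  proof (cases "x \<in> {a<..<b}")
    case True
    have "(\<integral>\<^sup>+y. ennreal (indicator {c<..<d} y * f x y) \<partial>lborel) = ennreal (g x)"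
      by (rule nn_integral_indicator_open_interval[OF _ g[OF True]]) (rule nonneg[OF True])
    with True show ?thesis by (simp add: F_def)
  qed (simp add: F_def)
  have inner_x: "(\<integral>\<^sup>+x. F x y \<partial>lborel) = ennreal (indicator {c<..<d} y * h y)" for y
  proof (cases "y \<in> {c<..<d}")
    case True
    have "(\<integral>\<^sup>+x. ennreal (indicator {a<..<b} x * f x y) \<partial>lborel) = ennreal (h y)"
      by (rule nn_integral_indicator_open_interval[OF _ h[OF True]]) (rule nonneg[OF _ True])
    with True show ?thesis by (simp add: F_def mult_ac)
  qed (simp add: F_def)
  have "case_prod F \<in> borel_measurable (borel \<Otimes>\<^sub>M borel)"
    using f_meas[folded borel_prod] unfolding F_def by measurable
  then have "(\<integral>\<^sup>+x. ennreal (indicator {a<..<b} x * g x) \<partial>lborel)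
      = (\<integral>\<^sup>+y. ennreal (indicator {c<..<d} y * h y) \<partial>lborel)"
    using lborel_pair.Fubini'[of F] by (simp add: inner_x inner_y lborel_prod borel_prod)
  also have "\<dots> = ennreal I"
    by (rule nn_integral_indicator_open_interval[OF h_nonneg I])
  finally have "(\<integral>\<^sup>+x. ennreal (indicator {a<..<b} x * g x) \<partial>lborel) = ennreal I" .
  moreover have "(\<lambda>x. indicator {a<..<b} x * g x) \<in> borel_measurable borel"
    using g_meas by measurable
  ultimately have "((\<lambda>x. indicator {a<..<b} x * g x) has_integral I) UNIV"
    using g_nonneg \<open>0 \<le> I\<close> by (intro nn_integral_has_integral) (auto simp: indicator_def)
  moreover have "(\<lambda>x. indicator {a<..<b} x * g x) = (\<lambda>x. if x \<in> {a<..<b} then g x else 0)"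
    by (auto simp: indicator_def)
  ultimately have "(g has_integral I) {a<..<b}"
    by (simp only: has_integral_restrict_UNIV)
  then show ?thesis
    by (simp only: has_integral_real_open_interval_iff)
qed

lemma alternating_sum_bounds:
  fixes a :: "nat \<Rightarrow> real"
  assumes "\<And>n. 0 \<le> a n" "\<And>n. a (Suc n) \<le> a n"
  shows "0 \<le> (\<Sum>i<N. (-1)^i * a i) \<and> (\<Sum>i<N. (-1)^i * a i) \<le> a 0"
  using assms
proof (induction N arbitrary: a)
  case (Suc N)
  have "(\<Sum>i<Suc N. (-1)^i * a i) = a 0 - (\<Sum>i<N. (-1)^i * a (Suc i))"
    by (subst sum.lessThan_Suc_shift) (simp add: sum_negf)
  moreover have "0 \<le> (\<Sum>i<N. (-1)^i * a (Suc i)) \<and> (\<Sum>i<N. (-1)^i * a (Suc i)) \<le> a 1"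
    using Suc.IH[of "\<lambda>i. a (Suc i)"] Suc.prems by simp
  ultimately show ?case
    using Suc.prems[of 0] by auto
qed simp

lemma sum_alternating_power_inverse:
  fixes a b :: real
  assumes "0 < a" "0 < b"
  shows "(\<Sum>k=0..2*j. (-1)^k / (a ^ (k+1) * b ^ (2*j-k+1))) = (1 / a^(2*j+1) + 1 / b^(2*j+1)) / (a + b)"
proof -
  define u v where "u = 1 / a" and "v = 1 / b"
  have "0 < u" "0 < v"
    using assms by (simp_all add: u_def v_def)
  have "(-u) ^ Suc (2*j) - v ^ Suc (2*j) = (-u - v) * (\<Sum>k<Suc (2*j). (-u)^k * v^(2*j-k))"
    by (rule diff_power_eq_sum)
  then have "u^(2*j+1) + v^(2*j+1) = (u + v) * (\<Sum>k<Suc (2*j). (-u)^k * v^(2*j-k))"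
    by (simp add: algebra_simps)
  then have geometric: "(\<Sum>k<Suc (2*j). (-u)^k * v^(2*j-k)) = (u^(2*j+1) + v^(2*j+1)) / (u + v)"
    using \<open>0 < u\<close> \<open>0 < v\<close> by (simp add: nonzero_eq_divide_eq mult.commute)
  have "(-1)^k / (a ^ (k+1) * b ^ (2*j-k+1)) = u * v * ((-u)^k * v^(2*j-k))" for k
  proof -
    have "(-1)^k / (a ^ (k+1) * b ^ (2*j-k+1)) = (-1)^k * (u ^ (k+1) * v ^ (2*j-k+1))"
      by (simp add: u_def v_def power_one_over)
    also have "\<dots> = u * v * ((-u)^k * v^(2*j-k))"
      using power_minus[of u k] by (simp add: mult_ac)
    finally show ?thesis .
  qed
  then have "(\<Sum>k=0..2*j. (-1)^k / (a ^ (k+1) * b ^ (2*j-k+1))) = u * v * (\<Sum>k<Suc (2*j). (-u)^k * v^(2*j-k))"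
    by (simp add: atLeast0AtMost lessThan_Suc_atMost sum_distrib_left)
  also have "\<dots> = u * v / (u + v) * (u^(2*j+1) + v^(2*j+1))"
    unfolding geometric by simp
  also have "u * v / (u + v) = 1 / (a + b)"
    using assms by (simp add: u_def v_def field_simps)
  finally show ?thesis
    by (simp add: u_def v_def power_one_over)
qed

lemma abs_sum_power_mult_le:
  fixes y B :: real
  assumes "\<bar>y\<bar> < 1" and "\<And>n. \<bar>c n\<bar> \<le> B"
  shows "\<bar>\<Sum>n<N. y^n * c n\<bar> \<le> B / (1 - \<bar>y\<bar>)"
proof -
  have "\<bar>\<Sum>n<N. y^n * c n\<bar> \<le> (\<Sum>n<N. \<bar>y\<bar>^n) * B"
    unfolding sum_distrib_right
    by (rule order_trans[OF sum_abs sum_mono]) (simp add: abs_mult power_abs mult_left_mono assms(2))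
  also have "\<dots> \<le> (\<Sum>n. \<bar>y\<bar>^n) * B"
    using assms order_trans[OF abs_ge_zero assms(2)]
    by (intro mult_right_mono sum_le_suminf summable_geometric) auto
  also have "\<dots> = B / (1 - \<bar>y\<bar>)"
    using suminf_geometric[of "\<bar>y\<bar>"] assms(1) by simp
  finally show ?thesis .
qed

lemma has_integral_power_mult_cos_reduction:
  fixes a L C :: real and p :: nat
  assumes cos_aL: "cos (a * L) = 0" and a: "a \<noteq> 0" and L: "0 \<le> L"
    and prev: "((\<lambda>x. x ^ p * cos (a * x)) has_integral C) {0..L}"
  shows "((\<lambda>x. x ^ (p + 2) * cos (a * x)) has_integral
           L ^ (p + 2) * sin (a * L) / a - real (p + 2) * real (p + 1) / a\<^sup>2 * C) {0..L}"
proof -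
  define \<Phi> where
    "\<Phi> x = x ^ (p + 2) * sin (a * x) / a + real (p + 2) * x ^ (p + 1) * cos (a * x) / a\<^sup>2" for x
  have "(\<Phi> has_real_derivative
          x ^ (p + 2) * cos (a * x) + real (p + 2) * real (p + 1) / a\<^sup>2 * (x ^ p * cos (a * x))) (at x)"
    for x
    unfolding \<Phi>_def
    using a by (auto intro!: derivative_eq_intros simp del: power_Suc simp: field_simps power2_eq_square)
  then have "((\<lambda>x. x ^ (p + 2) * cos (a * x) + real (p + 2) * real (p + 1) / a\<^sup>2 * (x ^ p * cos (a * x)))
               has_integral \<Phi> L - \<Phi> 0) {0..L}"
    using L by (intro fundamental_theorem_of_calculus)
      (auto simp: has_real_derivative_iff_has_vector_derivative[symmetric] intro: has_field_derivative_at_within)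
  from has_integral_diff[OF this has_integral_mult_right[OF prev, of "real (p + 2) * real (p + 1) / a\<^sup>2"]]
  show ?thesis
    using cos_aL by (simp add: \<Phi>_def)
qed

lemma has_integral_even_power_mult_cos:
  fixes a L :: real
  assumes "cos (a * L) = 0" "a \<noteq> 0" "0 \<le> L"
  shows "((\<lambda>x. x ^ (2*m) * cos (a * x)) has_integral
           (\<Sum>j=0..m. (-1)^j * fact (2*m) / fact (2*m - 2*j) * L ^ (2*m - 2*j) * sin (a * L) / a ^ (2*j+1)))
         {0..L}"
proof (induction m)
  case 0
  have "((\<lambda>x. sin (a * x) / a) has_real_derivative cos (a * x)) (at x)" for x
    using assms(2) by (auto intro!: derivative_eq_intros)
  then have "((\<lambda>x. cos (a * x)) has_integral sin (a * L) / a - sin (a * 0) / a) {0..L}"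
    using assms(3) by (intro fundamental_theorem_of_calculus)
      (auto simp: has_real_derivative_iff_has_vector_derivative[symmetric] intro: has_field_derivative_at_within)
  then show ?case by simp
next
  case (Suc m)
  let ?S = "\<lambda>m. \<Sum>j=0..m. (-1)^j * fact (2*m) / fact (2*m - 2*j) * L ^ (2*m - 2*j) * sin (a * L) / a ^ (2*j+1)"
  have fact_step: "fact (2 * Suc m) = real (2*m + 2) * real (2*m + 1) * (fact (2*m) :: real)"
    by (simp add: algebra_simps)
  have "?S (Suc m) = L ^ (2*m + 2) * sin (a * L) / a
      + (\<Sum>j=0..m. (-1)^Suc j * fact (2 * Suc m) / fact (2 * Suc m - 2 * Suc j)
           * L ^ (2 * Suc m - 2 * Suc j) * sin (a * L) / a ^ (2 * Suc j + 1))"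
    by (subst sum.atLeast0_atMost_Suc_shift) simp
  also have "\<dots> = L ^ (2*m + 2) * sin (a * L) / a - real (2*m + 2) * real (2*m + 1) / a\<^sup>2 * ?S m"
    unfolding sum_distrib_left diff_conv_add_uminus sum_negf[symmetric] fact_step using assms(2)
    by (intro arg_cong2[where f = "(+)"] sum.cong) (simp_all add: field_simps power2_eq_square)
  finally show ?case
    using has_integral_power_mult_cos_reduction[OF assms Suc.IH] by (simp add: mult_2_right)
qed

definition moment_coeff :: "nat \<Rightarrow> nat \<Rightarrow> real" where
  "moment_coeff m j = (-1)^j * fact (2*m) / fact (2*m - 2*j) * (pi/2) ^ (2*m - 2*j)"

definition cos_moment :: "nat \<Rightarrow> nat \<Rightarrow> real" where
  "cos_moment m n = (\<Sum>j=0..m. moment_coeff m j * ((-1)^n / (2 * real n + 1) ^ (2*j+1)))"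

lemma cos_odd_mult_pi_half: "cos ((2 * real n + 1) * (pi/2)) = 0"
  and sin_odd_mult_pi_half: "sin ((2 * real n + 1) * (pi/2)) = (-1)^n"
proof -
  have arg: "(2 * real n + 1) * (pi/2) = real n * pi + pi/2"
    by (simp add: algebra_simps)
  show "cos ((2 * real n + 1) * (pi/2)) = 0" "sin ((2 * real n + 1) * (pi/2)) = (-1)^n"
    unfolding arg by (simp_all add: cos_add sin_add)
qed

lemma has_integral_cos_moment:
  "((\<lambda>x. x ^ (2*m) * cos ((2 * real n + 1) * x)) has_integral cos_moment m n) {0..pi/2}"
  using has_integral_even_power_mult_cos[OF cos_odd_mult_pi_half, of n m]
  unfolding sin_odd_mult_pi_half by (simp add: cos_moment_def moment_coeff_def mult.assoc)

lemma abs_cos_moment_le: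
  "\<bar>cos_moment m n\<bar> \<le> (\<Sum>j=0..m. \<bar>moment_coeff m j\<bar>) / (2 * real n + 1)"
proof -
  have "\<bar>cos_moment m n\<bar> \<le> (\<Sum>j=0..m. \<bar>moment_coeff m j\<bar> * (1 / (2 * real n + 1) ^ (2*j+1)))"
    unfolding cos_moment_def by (rule order_trans[OF sum_abs]) (simp add: abs_mult power_abs)
  also have "\<dots> \<le> (\<Sum>j=0..m. \<bar>moment_coeff m j\<bar> * (1 / (2 * real n + 1)))"
    by (intro sum_mono mult_left_mono divide_left_mono self_le_power) auto
  finally show ?thesis
    by (simp add: sum_divide_distrib)
qed

lemma abs_cos_moment_le_coeff_sum: "\<bar>cos_moment m n\<bar> \<le> (\<Sum>j=0..m. \<bar>moment_coeff m j\<bar>)"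
proof -
  have "(\<Sum>j=0..m. \<bar>moment_coeff m j\<bar>) / (2 * real n + 1) \<le> (\<Sum>j=0..m. \<bar>moment_coeff m j\<bar>) / 1"
    by (intro divide_left_mono sum_nonneg) auto
  with abs_cos_moment_le[of m n] show ?thesis
    by simp
qed

lemma summable_abs_cos_moment_mult_power:
  fixes y :: real
  assumes "\<bar>y\<bar> < 1"
  shows "summable (\<lambda>n. \<bar>cos_moment m n\<bar> * \<bar>y\<bar>^n)"
proof -
  have "\<forall>n. norm (\<bar>cos_moment m n\<bar> * \<bar>y\<bar>^n) \<le> (\<Sum>j=0..m. \<bar>moment_coeff m j\<bar>) * \<bar>y\<bar>^n"
    by (simp add: mult_right_mono abs_cos_moment_le_coeff_sum)
  moreover have "summable (\<lambda>n. (\<Sum>j=0..m. \<bar>moment_coeff m j\<bar>) * \<bar>y\<bar>^n)"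
    using assms by (intro summable_mult summable_geometric) simp
  ultimately show ?thesis
    by (rule summable_comparison_test_ev[OF always_eventually])
qed

(* |1 - y e^(2ix)|^2 *)
definition poisson_den :: "real \<Rightarrow> real \<Rightarrow> real" where
  "poisson_den x y = 1 - 2 * y * cos (2 * x) + y\<^sup>2"

lemma poisson_den_eq: "poisson_den x y = (1 - y)\<^sup>2 + 4 * y * (sin x)\<^sup>2"
  unfolding poisson_den_def cos_double_sin by (simp add: power2_eq_square algebra_simps)

lemma poisson_den_pos: "0 \<le> y \<Longrightarrow> y < 1 \<Longrightarrow> 0 < poisson_den x y"
  unfolding poisson_den_eq by (intro add_pos_nonneg) auto

(* Real part of the geometric expansion of e^(ix) / (1 - y e^(2ix)). *)
lemma sums_power_mult_cos_odd:
  fixes x y :: real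
  assumes "\<bar>y\<bar> < 1"
  shows "(\<lambda>n. y^n * cos ((2 * real n + 1) * x)) sums ((1 - y) * cos x / poisson_den x y)"
proof -
  define z where "z = complex_of_real y * cis (2 * x)"
  have "norm z < 1"
    using assms by (simp add: z_def norm_mult)
  then have "(\<lambda>n. cis x * z^n) sums (cis x / (1 - z))"
    using sums_mult[OF geometric_sums, of z "cis x"] by (simp add: divide_inverse)
  from sums_Re[OF this] have "(\<lambda>n. Re (cis x * z^n)) sums Re (cis x / (1 - z))" .
  moreover have "Re (cis x * z^n) = y^n * cos ((2 * real n + 1) * x)" for n
  proof -
    have "cis x * z^n = complex_of_real (y^n) * (cis x * cis (real n * (2 * x)))"
      by (simp add: z_def power_mult_distrib Complex.DeMoivre)
    also have "cis x * cis (real n * (2 * x)) = cis ((2 * real n + 1) * x)"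
      unfolding cis_mult by (simp add: algebra_simps)
    finally show ?thesis by simp
  qed
  moreover have "Re (cis x / (1 - z)) = (1 - y) * cos x / poisson_den x y"
  proof -
    have "cos x * (1 - y * cos (2 * x)) - sin x * (y * sin (2 * x)) = (1 - y) * cos x"
      using cos_diff[of "2 * x" x] by (simp add: algebra_simps flip: distrib_left)
    moreover have "(1 - y * c)\<^sup>2 + (y * s)\<^sup>2 = 1 - 2 * y * c + y\<^sup>2 * (s\<^sup>2 + c\<^sup>2)" for c s :: real
      by (simp add: power2_eq_square algebra_simps)
    then have "(1 - y * cos (2 * x))\<^sup>2 + (y * sin (2 * x))\<^sup>2 = poisson_den x y"
      unfolding sin_cos_squared_add poisson_den_def by simp
    ultimately show ?thesis
      by (simp add: z_def Re_divide)
  qed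
  ultimately show ?thesis by simp
qed

lemma has_integral_log_sin_kernel:
  fixes x :: real
  assumes "0 < x" "x < pi/2"
  shows "((\<lambda>y. (1 - y) * cos x / ((1 + y) * poisson_den x y)) has_integral - ln (sin x) / (2 * cos x))
           {0..1}"
proof -
  have cos_pos: "0 < cos x" and sin_pos: "0 < sin x"
    using assms by (auto intro: cos_gt_zero sin_gt_zero)
  have den_pos: "0 < poisson_den x y" if "0 \<le> y" for y
    unfolding poisson_den_eq using that sin_pos by (cases "y = 0") (auto intro: add_nonneg_pos)
  define \<Psi> where "\<Psi> y = (ln (1 + y) - ln (poisson_den x y) / 2) / (2 * cos x)" for y
  have "(\<Psi> has_real_derivative (1 - y) * cos x / ((1 + y) * poisson_den x y)) (at y)" if "0 \<le> y" for y
  proof -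
    define c where "c = cos (2 * x)"
    define D where "D = poisson_den x y"
    have D_pos: "0 < D" and "0 < 1 + y"
      using den_pos[OF that] that by (simp_all add: D_def)
    have "((\<lambda>y. poisson_den x y) has_real_derivative 2 * y - 2 * c) (at y)"
      unfolding poisson_den_def c_def by (auto intro!: derivative_eq_intros)
    then have "(\<Psi> has_real_derivative (1 / (1 + y) - (2 * y - 2 * c) / D / 2) / (2 * cos x)) (at y)"
      unfolding \<Psi>_def D_def using D_pos \<open>0 < 1 + y\<close> cos_pos
      by (auto intro!: derivative_eq_intros simp: D_def) (simp add: divide_simps)
    moreover have "1 / (1 + y) - (2 * y - 2 * c) / D / 2 = (D - (y - c) * (1 + y)) / ((1 + y) * D)"
      using D_pos \<open>0 < 1 + y\<close> by (simp add: divide_simps)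
    moreover have "D - (y - c) * (1 + y) = 2 * (cos x)\<^sup>2 * (1 - y)"
      unfolding D_def c_def poisson_den_def cos_double_cos by (simp add: power2_eq_square algebra_simps)
    ultimately show ?thesis
      using cos_pos by (simp add: D_def power2_eq_square mult.commute)
  qed
  then have FTC: "((\<lambda>y. (1 - y) * cos x / ((1 + y) * poisson_den x y)) has_integral \<Psi> 1 - \<Psi> 0) {0..1}"
    by (intro fundamental_theorem_of_calculus)
      (auto simp: has_real_derivative_iff_has_vector_derivative[symmetric] intro: has_field_derivative_at_within)
  have "poisson_den x 1 = (2 * sin x)\<^sup>2" "poisson_den x 0 = 1"
    by (simp_all add: poisson_den_eq power_mult_distrib)
  moreover have "ln (4::real) = 2 * ln 2"
    using ln_realpow[of 2 2] by simp
  ultimately have "\<Psi> 1 - \<Psi> 0 = - ln (sin x) / (2 * cos x)"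
    using sin_pos by (simp add: \<Psi>_def ln_realpow ln_mult field_simps)
  with FTC show ?thesis by simp
qed

lemma has_integral_power_mult_poisson:
  fixes y :: real
  assumes "\<bar>y\<bar> < 1"
  shows "summable (\<lambda>n. y^n * cos_moment m n)"
    and "((\<lambda>x. x ^ (2*m) * ((1 - y) * cos x / poisson_den x y)) has_integral (\<Sum>n. y^n * cos_moment m n))
           {0..pi/2}"
proof -
  define f where "f N x = (\<Sum>n<N. y^n * (x ^ (2*m) * cos ((2 * real n + 1) * x)))" for N x
  define g where "g x = x ^ (2*m) * ((1 - y) * cos x / poisson_den x y)" for x
  have f_int: "(f N has_integral (\<Sum>n<N. y^n * cos_moment m n)) {0..pi/2}" for N
    unfolding f_def by (intro has_integral_sum has_integral_mult_right has_integral_cos_moment) auto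
  have f_bound: "norm (f N x) \<le> (pi/2) ^ (2*m) / (1 - \<bar>y\<bar>)" if "x \<in> {0..pi/2}" for N x
  proof -
    have "\<bar>x ^ (2*m) * cos ((2 * real n + 1) * x)\<bar> \<le> (pi/2) ^ (2*m) * 1" for n
      unfolding abs_mult power_abs using that by (intro mult_mono power_mono) auto
    then show ?thesis
      unfolding f_def real_norm_def by (intro abs_sum_power_mult_le assms) simp
  qed
  have f_lim: "(\<lambda>N. f N x) \<longlonglongrightarrow> g x" for x
    using sums_mult[OF sums_power_mult_cos_odd[OF assms], of "x ^ (2*m)"]
    unfolding f_def g_def sums_def by (simp add: algebra_simps)
  have f_integrable: "f N integrable_on {0..pi/2}" for N
    using f_int by blast
  note dominated = dominated_convergence[of f "{0..pi/2}" "\<lambda>_. (pi/2) ^ (2*m) / (1 - \<bar>y\<bar>)" g,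
      OF f_integrable integrable_const_ivl f_bound f_lim]
  have "integral {0..pi/2} (f N) = (\<Sum>n<N. y^n * cos_moment m n)" for N
    using f_int by (rule integral_unique)
  then have "(\<lambda>n. y^n * cos_moment m n) sums integral {0..pi/2} g"
    using dominated(2) unfolding sums_def by simp
  then show "summable (\<lambda>n. y^n * cos_moment m n)"
    and "(g has_integral (\<Sum>n. y^n * cos_moment m n)) {0..pi/2}"
    using dominated(1) by (auto simp: sums_iff)
qed

definition tau :: "nat \<Rightarrow> real" where
  "tau n = integral {0..1} (\<lambda>y. y^n / (1 + y))"

lemma has_integral_tau: "((\<lambda>y. y^n / (1 + y)) has_integral tau n) {0..1}"
  unfolding tau_def by (intro integrable_integral integrable_continuous_real continuous_intros) auto

lemma has_integral_power_unit_interval: "((\<lambda>y::real. y^n) has_integral 1 / (real n + 1)) {0..1}"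
proof -
  have "((\<lambda>y::real. y ^ Suc n / (real n + 1)) has_real_derivative y^n) (at y)" for y
    by (auto intro!: derivative_eq_intros simp del: power_Suc simp: add.commute)
  then have "((\<lambda>y::real. y^n) has_integral 1 ^ Suc n / (real n + 1) - 0 ^ Suc n / (real n + 1)) {0..1}"
    by (intro fundamental_theorem_of_calculus)
      (auto simp: has_real_derivative_iff_has_vector_derivative[symmetric] intro: has_field_derivative_at_within)
  then show ?thesis by simp
qed

lemma tau_add_tau_Suc: "tau n + tau (Suc n) = 1 / (real n + 1)"
proof -
  have "((\<lambda>y. y^n / (1 + y) + y ^ Suc n / (1 + y)) has_integral tau n + tau (Suc n)) {0..1}"
    by (intro has_integral_add has_integral_tau)
  moreover have "y^n / (1 + y) + y ^ Suc n / (1 + y) = y^n" if "y \<in> {0..1}" for y :: real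
  proof -
    have "y^n / (1 + y) + y ^ Suc n / (1 + y) = y^n * (1 + y) / (1 + y)"
      by (simp add: add_divide_distrib algebra_simps)
    with that show ?thesis by simp
  qed
  ultimately have "((\<lambda>y::real. y^n) has_integral tau n + tau (Suc n)) {0..1}"
    by (rule has_integral_cong[THEN iffD1, rotated])
  then show ?thesis
    using has_integral_power_unit_interval has_integral_unique by blast
qed

lemma tau_nonneg: "0 \<le> tau n"
  by (rule has_integral_nonneg[OF has_integral_tau]) auto

lemma tau_le: "tau n \<le> 1 / (real n + 1)"
proof (rule has_integral_le[OF has_integral_tau has_integral_power_unit_interval])
  fix y :: real
  assume "y \<in> {0..1}"
  then have "y^n / (1 + y) \<le> y^n / 1"
    by (intro divide_left_mono) auto
  then show "y^n / (1 + y) \<le> y^n" by simp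
qed

lemma tau_Suc_le: "tau (Suc n) \<le> tau n"
proof (rule has_integral_le[OF has_integral_tau has_integral_tau])
  fix y :: real
  assume "y \<in> {0..1}"
  then show "y ^ Suc n / (1 + y) \<le> y^n / (1 + y)"
    by (intro divide_right_mono) (auto simp: mult_left_le_one_le)
qed

lemma sum_alternating_inverse_eq_tau:
  "(\<Sum>p<N. (-1)^p / (real n + real p + 1)) = tau n - (-1)^N * tau (n + N)"
proof (induction N)
  case (Suc N)
  have "(-1)^N / (real n + real N + 1) = (-1)^N * (tau (n + N) + tau (Suc (n + N)))"
    by (simp add: tau_add_tau_Suc add.assoc)
  with Suc show ?case by (simp add: algebra_simps)
qed simp

lemma sums_dirichlet_beta:
  assumes "0 < r"
  shows "(\<lambda>n. (-1)^n / (2 * real n + 1) ^ r) sums dirichlet_beta r"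
proof -
  have "filterlim (\<lambda>n. 2 * real n + 1) at_top sequentially"
    by (intro filterlim_at_top_mono[OF filterlim_real_sequentially]) auto
  then have "(\<lambda>n. inverse ((2 * real n + 1) ^ r)) \<longlonglongrightarrow> 0"
    by (intro tendsto_inverse_0_at_top filterlim_pow_at_top assms)
  then have "summable (\<lambda>n. (-1)^n * (1 / (2 * real n + 1) ^ r))"
    by (intro summable_Leibniz'(1) divide_left_mono power_mono) (auto simp: inverse_eq_divide)
  then show ?thesis
    unfolding dirichlet_beta_def by (simp add: summable_sums)
qed

lemma tendsto_alternating_tau_tail:
  "(\<lambda>N. \<Sum>n<N. (-1)^n / (2 * real n + 1) ^ r * tau (n + N)) \<longlonglongrightarrow> 0"
proof (rule Lim_null_comparison)
  show "(\<lambda>N. 1 / (real N + 1)) \<longlonglongrightarrow> 0"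
    using LIMSEQ_inverse_real_of_nat by (simp add: inverse_eq_divide add.commute)
  show "\<forall>\<^sub>F N in sequentially. norm (\<Sum>n<N. (-1)^n / (2 * real n + 1) ^ r * tau (n + N)) \<le> 1 / (real N + 1)"
  proof (intro always_eventually allI)
    fix N
    define a where "a n = tau (n + N) / (2 * real n + 1) ^ r" for n
    have "a (Suc n) \<le> a n" for n
      unfolding a_def using tau_nonneg tau_Suc_le[of "n + N"]
      by (intro frac_le power_mono) auto
    then have "0 \<le> (\<Sum>n<N. (-1)^n * a n) \<and> (\<Sum>n<N. (-1)^n * a n) \<le> a 0"
      by (intro alternating_sum_bounds) (auto simp: a_def tau_nonneg)
    moreover have "a 0 \<le> 1 / (real N + 1)"
      using tau_le[of N] by (simp add: a_def)
    ultimately show "norm (\<Sum>n<N. (-1)^n / (2 * real n + 1) ^ r * tau (n + N)) \<le> 1 / (real N + 1)"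
      by (simp add: a_def)
  qed
qed

lemma sum_alternating_odd_inverse_pair:
  "(-1)^n * (-1)^p * (\<Sum>k=0..2*j. (-1)^k / ((2 * real n + 1) ^ (k+1) * (2 * real p + 1) ^ (2*j-k+1)))
   = ((-1)^n / (2 * real n + 1) ^ (2*j+1) * ((-1)^p / (real n + real p + 1))
      + (-1)^p / (2 * real p + 1) ^ (2*j+1) * ((-1)^n / (real p + real n + 1))) / 2"
proof -
  define s u v where "s = real n + real p + 1"
    and "u = (2 * real n + 1) ^ (2*j+1)" and "v = (2 * real p + 1) ^ (2*j+1)"
  have "0 < s" "0 < u" "0 < v"
    by (simp_all add: s_def u_def v_def)
  have "(2 * real n + 1) + (2 * real p + 1) = 2 * s"
    by (simp add: s_def)
  then have "(\<Sum>k=0..2*j. (-1)^k / ((2 * real n + 1) ^ (k+1) * (2 * real p + 1) ^ (2*j-k+1)))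
      = (1 / u + 1 / v) / (2 * s)"
    unfolding u_def v_def by (subst sum_alternating_power_inverse) simp_all
  moreover have "real p + real n + 1 = s"
    by (simp add: s_def)
  ultimately show ?thesis
    unfolding u_def[symmetric] v_def[symmetric] s_def[symmetric]
    using \<open>0 < s\<close> \<open>0 < u\<close> \<open>0 < v\<close> by (simp add: field_simps)
qed

lemma sum_beta_partial_products:
  "(\<Sum>k=0..2*j. (-1)^k * ((\<Sum>n<N. (-1)^n / (2 * real n + 1) ^ (k+1))
                      * (\<Sum>p<N. (-1)^p / (2 * real p + 1) ^ (2*j-k+1))))
   = (\<Sum>n<N. (-1)^n * tau n / (2 * real n + 1) ^ (2*j+1))
     - (-1)^N * (\<Sum>n<N. (-1)^n / (2 * real n + 1) ^ (2*j+1) * tau (n + N))"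
proof -
  define A where "A n = 2 * real n + 1" for n
  define r where "r = 2*j+1"
  define T where "T n p = (-1)^n / A n ^ r * ((-1)^p / (real n + real p + 1))" for n p
  have "(\<Sum>k=0..2*j. (-1)^k * ((\<Sum>n<N. (-1)^n / A n ^ (k+1)) * (\<Sum>p<N. (-1)^p / A p ^ (2*j-k+1))))
      = (\<Sum>k=0..2*j. \<Sum>n<N. \<Sum>p<N. (-1)^k * ((-1)^n / A n ^ (k+1) * ((-1)^p / A p ^ (2*j-k+1))))"
    by (simp only: sum_product) (simp only: sum_distrib_left)
  also have "\<dots> = (\<Sum>n<N. \<Sum>p<N. \<Sum>k=0..2*j. (-1)^k * ((-1)^n / A n ^ (k+1) * ((-1)^p / A p ^ (2*j-k+1))))"
    by (subst sum.swap) (simp only: sum.swap[of _ "{0..2*j}"])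
  also have "\<dots> = (\<Sum>n<N. \<Sum>p<N. (-1)^n * (-1)^p * (\<Sum>k=0..2*j. (-1)^k / (A n ^ (k+1) * A p ^ (2*j-k+1))))"
    by (intro sum.cong refl) (simp add: sum_distrib_left mult_ac)
  also have "\<dots> = (\<Sum>n<N. \<Sum>p<N. (T n p + T p n) / 2)"
    unfolding A_def T_def r_def by (intro sum.cong refl sum_alternating_odd_inverse_pair)
  also have "\<dots> = (\<Sum>n<N. \<Sum>p<N. T n p)"
    by (simp add: sum_divide_distrib[symmetric] sum.distrib sum.swap[of "\<lambda>n p. T p n"])
  also have "\<dots> = (\<Sum>n<N. (-1)^n / A n ^ r * (\<Sum>p<N. (-1)^p / (real n + real p + 1)))"
    by (simp add: T_def sum_distrib_left)
  also have "\<dots> = (\<Sum>n<N. (-1)^n / A n ^ r * (tau n - (-1)^N * tau (n + N)))"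
    unfolding sum_alternating_inverse_eq_tau ..
  also have "\<dots> = (\<Sum>n<N. (-1)^n * tau n / A n ^ r) - (-1)^N * (\<Sum>n<N. (-1)^n / A n ^ r * tau (n + N))"
    by (simp add: right_diff_distrib sum_subtractf sum_distrib_left mult_ac)
  finally show ?thesis
    unfolding A_def r_def .
qed

lemma sums_alternating_tau_beta:
  "(\<lambda>n. (-1)^n * tau n / (2 * real n + 1) ^ (2*j+1)) sums
     (\<Sum>k=0..2*j. (-1)^k * dirichlet_beta (k+1) * dirichlet_beta (2*j-k+1))"
proof -
  define E where "E N = (\<Sum>n<N. (-1)^n / (2 * real n + 1) ^ (2*j+1) * tau (n + N))" for N
  have partial_beta: "(\<lambda>N. \<Sum>n<N. (-1)^n / (2 * real n + 1) ^ s) \<longlonglongrightarrow> dirichlet_beta s" if "0 < s" for s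
    using sums_dirichlet_beta[OF that] unfolding sums_def .
  have "(\<lambda>N. \<bar>(-1)^N * E N\<bar>) \<longlonglongrightarrow> 0"
    using tendsto_alternating_tau_tail[of "2*j+1"] by (simp add: E_def abs_mult tendsto_rabs_zero_iff)
  then have "(\<lambda>N. (-1)^N * E N) \<longlonglongrightarrow> 0"
    by (simp only: tendsto_rabs_zero_iff)
  then have "(\<lambda>N. (\<Sum>k=0..2*j. (-1)^k * ((\<Sum>n<N. (-1)^n / (2 * real n + 1) ^ (k+1))
                              * (\<Sum>p<N. (-1)^p / (2 * real p + 1) ^ (2*j-k+1)))) + (-1)^N * E N)
        \<longlonglongrightarrow> (\<Sum>k=0..2*j. (-1)^k * (dirichlet_beta (k+1) * dirichlet_beta (2*j-k+1))) + 0"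
    by (intro tendsto_add tendsto_sum tendsto_mult tendsto_const partial_beta) auto
  then show ?thesis
    unfolding sums_def sum_beta_partial_products E_def by (simp add: mult.assoc)
qed

lemma summable_abs_cos_moment_mult_tau: "summable (\<lambda>n. \<bar>cos_moment m n\<bar> * tau n)"
proof -
  define K where "K = (\<Sum>j=0..m. \<bar>moment_coeff m j\<bar>)"
  have "norm (\<bar>cos_moment m n\<bar> * tau n) \<le> K * inverse ((real n)\<^sup>2)" if "1 \<le> n" for n
  proof -
    have "norm (\<bar>cos_moment m n\<bar> * tau n) = \<bar>cos_moment m n\<bar> * tau n"
      using tau_nonneg by simp
    also have "\<dots> \<le> K / (2 * real n + 1) * (1 / (real n + 1))"
      unfolding K_def by (rule mult_mono[OF abs_cos_moment_le tau_le]) (auto intro: sum_nonneg tau_nonneg)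
    also have "\<dots> \<le> K * inverse ((real n)\<^sup>2)"
    proof -
      have "(real n)\<^sup>2 \<le> (2 * real n + 1) * (real n + 1)"
        by (simp add: power2_eq_square algebra_simps)
      then have "1 / ((2 * real n + 1) * (real n + 1)) \<le> inverse ((real n)\<^sup>2)"
        using that by (simp add: inverse_eq_divide divide_left_mono)
      moreover have "0 \<le> K"
        unfolding K_def by (simp add: sum_nonneg)
      ultimately have "K * (1 / ((2 * real n + 1) * (real n + 1))) \<le> K * inverse ((real n)\<^sup>2)"
        by (rule mult_left_mono)
      then show ?thesis
        by simp
    qed
    finally show ?thesis .
  qed
  then have "\<forall>\<^sub>F n in sequentially. norm (\<bar>cos_moment m n\<bar> * tau n) \<le> K * inverse ((real n)\<^sup>2)"
    by (rule eventually_sequentiallyI)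
  moreover have "summable (\<lambda>n. K * inverse ((real n)\<^sup>2))"
    by (intro summable_mult inverse_power_summable) simp
  ultimately show ?thesis
    by (rule summable_comparison_test_ev)
qed

lemma integrable_indicator_tau:
  "integrable lborel (\<lambda>y::real. indicator {0<..<1} y * (y^n / (1 + y)))"
  "integral\<^sup>L lborel (\<lambda>y::real. indicator {0<..<1} y * (y^n / (1 + y))) = tau n"
proof -
  let ?f = "\<lambda>y::real. indicator {0<..<1} y * (y^n / (1 + y))"
  have nn: "(\<integral>\<^sup>+y. ennreal (?f y) \<partial>lborel) = ennreal (tau n)"
    by (rule nn_integral_indicator_open_interval[OF _ has_integral_tau]) simp
  have meas: "?f \<in> borel_measurable lborel"
    by measurable
  have nonneg: "AE y in lborel. 0 \<le> ?f y"
    by (intro AE_I2) (simp add: indicator_def)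
  have "integrable lborel ?f \<and> integral\<^sup>L lborel ?f = tau n"
    by (rule iffD1[OF nn_integral_eq_integrable[OF meas nonneg tau_nonneg] nn])
  then show "integrable lborel ?f" "integral\<^sup>L lborel ?f = tau n"
    by blast+
qed

lemma has_integral_cos_moment_series:
  "((\<lambda>y. (\<Sum>n. y^n * cos_moment m n) / (1 + y)) has_integral (\<Sum>n. cos_moment m n * tau n)) {0..1}"
proof -
  define f where "f n y = cos_moment m n * (indicator {0<..<1} y * (y^n / (1 + y)))" for n and y :: real
  have f_integrable: "integrable lborel (f n)" for n
    unfolding f_def by (intro integrable_mult_right integrable_indicator_tau)
  have f_integral: "integral\<^sup>L lborel (f n) = cos_moment m n * tau n" for n
    unfolding f_def by (simp only: integral_mult_right_zero integrable_indicator_tau)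
  have f_norm_integral: "integral\<^sup>L lborel (\<lambda>y. norm (f n y)) = \<bar>cos_moment m n\<bar> * tau n" for n
  proof -
    have "(\<lambda>y. norm (f n y)) = (\<lambda>y. \<bar>cos_moment m n\<bar> * (indicator {0<..<1} y * (y^n / (1 + y))))"
      by (auto simp: f_def abs_mult indicator_def)
    then show ?thesis
      by (simp only: integral_mult_right_zero integrable_indicator_tau)
  qed
  have f_sums: "(\<lambda>n. f n y) sums (indicator {0<..<1} y * ((\<Sum>n. y^n * cos_moment m n) / (1 + y)))" for y
  proof (cases "y \<in> {0<..<1}")
    case True
    then have "summable (\<lambda>n. y^n * cos_moment m n)"
      by (intro has_integral_power_mult_poisson(1)) auto
    then have "(\<lambda>n. y^n * cos_moment m n / (1 + y)) sums ((\<Sum>n. y^n * cos_moment m n) / (1 + y))"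
      by (intro sums_divide summable_sums)
    with True show ?thesis
      by (simp add: f_def mult_ac)
  qed (simp add: f_def)
  have f_summable_norm: "summable (\<lambda>n. norm (f n y))" for y
  proof (cases "y \<in> {0<..<1}")
    case True
    then have "(\<lambda>n. norm (f n y)) = (\<lambda>n. \<bar>cos_moment m n\<bar> * \<bar>y\<bar>^n / (1 + y))"
      by (simp add: f_def abs_mult fun_eq_iff)
    with True show ?thesis
      using summable_divide[OF summable_abs_cos_moment_mult_power[of y m], of "1 + y"] by simp
  qed (simp add: f_def)
  have "summable (\<lambda>n. integral\<^sup>L lborel (\<lambda>y. norm (f n y)))"
    unfolding f_norm_integral by (rule summable_abs_cos_moment_mult_tau)
  note series = integrable_suminf[OF f_integrable AE_I2[OF f_summable_norm] this]
    integral_suminf[OF f_integrable AE_I2[OF f_summable_norm] this]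
  have "(\<lambda>y. \<Sum>n. f n y) = (\<lambda>y. if y \<in> {0<..<1} then (\<Sum>n. y^n * cos_moment m n) / (1 + y) else 0)"
    using f_sums by (auto simp: sums_iff fun_eq_iff)
  then have "((\<lambda>y. if y \<in> {0<..<1} then (\<Sum>n. y^n * cos_moment m n) / (1 + y) else 0)
      has_integral (\<Sum>n. cos_moment m n * tau n)) UNIV"
    using has_integral_integral_real[OF series(1)] series(2) by (simp add: f_integral)
  then show ?thesis
    by (simp only: has_integral_restrict_UNIV flip: has_integral_real_open_interval_iff)
qed

lemma has_integral_power_mult_log_sin_div_cos:
  "((\<lambda>x. x ^ (2*m) * ln (sin x) / cos x) has_integral - 2 * (\<Sum>n. cos_moment m n * tau n)) {0..pi/2}"
proof -
  define f where "f x y = x ^ (2*m) * ((1 - y) * cos x / ((1 + y) * poisson_den x y))" for x y :: real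
  have "((\<lambda>x. x ^ (2*m) * (- ln (sin x) / (2 * cos x))) has_integral (\<Sum>n. cos_moment m n * tau n)) {0..pi/2}"
  proof (rule has_integral_iterated_swap_nonneg[of f, OF _ _ _ _ _ has_integral_cos_moment_series])
    show "case_prod f \<in> borel_measurable borel"
      unfolding f_def poisson_den_def borel_prod[symmetric] by measurable
    show "(\<lambda>x::real. x ^ (2*m) * (- ln (sin x) / (2 * cos x))) \<in> borel_measurable borel"
      by measurable
    show "0 \<le> f x y" if "x \<in> {0<..<pi/2}" "y \<in> {0<..<1}" for x y
      using that poisson_den_pos[of y x] cos_gt_zero[of x] by (simp add: f_def)
    show "((\<lambda>y. f x y) has_integral x ^ (2*m) * (- ln (sin x) / (2 * cos x))) {0..1}"
      if "x \<in> {0<..<pi/2}" for x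
      using that unfolding f_def by (intro has_integral_mult_right has_integral_log_sin_kernel) auto
    show "((\<lambda>x. f x y) has_integral (\<Sum>n. y^n * cos_moment m n) / (1 + y)) {0..pi/2}"
      if "y \<in> {0<..<1}" for y
      using has_integral_divide[OF has_integral_power_mult_poisson(2), of y m "1 + y"] that
      by (simp add: f_def ac_simps)
  qed
  from has_integral_mult_right[OF this, of "-2"] show ?thesis
    by simp
qed

lemma suminf_cos_moment_mult_tau:
  "(\<Sum>n. cos_moment m n * tau n)
     = (\<Sum>j=0..m. moment_coeff m j * (\<Sum>k=0..2*j. (-1)^k * dirichlet_beta (k+1) * dirichlet_beta (2*j-k+1)))"
proof -
  define t where "t j n = moment_coeff m j * ((-1)^n * tau n / (2 * real n + 1) ^ (2*j+1))" for j n
  have t_sums: "t j sums (moment_coeff m j * (\<Sum>k=0..2*j. (-1)^k * dirichlet_beta (k+1) * dirichlet_beta (2*j-k+1)))"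
    for j
    unfolding t_def by (intro sums_mult sums_alternating_tau_beta)
  have "cos_moment m n * tau n = (\<Sum>j=0..m. t j n)" for n
    unfolding cos_moment_def sum_distrib_right t_def by (intro sum.cong refl) simp
  then have "(\<Sum>n. cos_moment m n * tau n) = (\<Sum>n. \<Sum>j=0..m. t j n)"
    by simp
  also have "\<dots> = (\<Sum>j=0..m. \<Sum>n. t j n)"
    using t_sums by (intro suminf_sum) (blast intro: sums_summable)
  finally show ?thesis
    using t_sums by (simp add: sums_iff)
qed

theorem lemma2:
  fixes m :: nat
  shows "((\<lambda>x::real. x ^ (2*m) * ln (sin x) / cos x) has_integral
     (2 * fact (2*m) * (\<Sum>j=0..m. ((-1::real) powi (int j - 1)) / fact (2*m - 2*j)
        * (pi/2) ^ (2*m - 2*j)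
        * (\<Sum>k=0..2*j. (-1) ^ k * dirichlet_beta (k+1) * dirichlet_beta (2*j - k + 1)))))
     {0..pi/2}"
proof -
  have "(-1::real) powi (int j - 1) = - ((-1) ^ j)" for j
    using power_int_diff[of "-1::real" "int j" 1] by simp
  then have closed_form: "- 2 * (\<Sum>n. cos_moment m n * tau n)
      = 2 * fact (2*m) * (\<Sum>j=0..m. ((-1::real) powi (int j - 1)) / fact (2*m - 2*j) * (pi/2) ^ (2*m - 2*j)
          * (\<Sum>k=0..2*j. (-1) ^ k * dirichlet_beta (k+1) * dirichlet_beta (2*j - k + 1)))"
    unfolding suminf_cos_moment_mult_tau moment_coeff_def sum_distrib_left
    by (intro sum.cong refl) (simp add: field_simps)
  show ?thesis
    using has_integral_power_mult_log_sin_div_cos[of m] unfolding closed_form .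
qed

end
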